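(* Let $S:M\to\mathbb{R}$ be a smooth function on Minkowski spacetime, let $\mathcal{F}_0$ be a nonzero constant $2$-form with $\mathcal{F}_0^{2}=0$ (Clifford product), let $\mu$ be a real constant, and define the $2$-form field $$\boldsymbol{F}=\mathcal{F}_0\, e^{\boldsymbol{\gamma}^5 S}=\mathcal{F}_0(\cos S+\boldsymbol{\gamma}^5\sin S).$$ (i) If the $1$-form field $\boldsymbol{P}:=-\boldsymbol{\partial} S=-dS$ satisfies $\boldsymbol{P}=\mu\,\boldsymbol{F}\boldsymbol{\gamma}^0\boldsymbol{F}$, then $\boldsymbol{F}$ satisfies the free Maxwell equation $\boldsymbol{\partial}\boldsymbol{F}=0$. (ii) Conversely, if $\boldsymbol{\partial}\boldsymbol{F}=0$, then $S$ satisfies the Hamilton–Jacobi equation of a free massless particle, $\boldsymbol{\partial}S\cdot\boldsymbol{\partial}S=0$. Consequently, for fields of this form, the free photon Hamilton–Jacobi equation $\boldsymbol{\partial}S\cdot\boldsymbol{\partial}S=0$ and the free Maxwell equation $\boldsymbol{\partial}\boldsymbol{F}=0$ are equivalent.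
   Context: Minkowski spacetime is $M\simeq\mathbb{R}^4$ with global coordinates $\{x^\mu\}$ ($\mu=0,1,2,3$) in which the metric is $\boldsymbol{g}=\eta_{\mu\nu}dx^\mu\otimes dx^\nu$, $\eta=\mathrm{diag}(1,-1,-1,-1)$. Write $\boldsymbol{\gamma}^\mu=dx^\mu$. Differential forms are regarded as sections of the Clifford bundle of differential forms $\mathcal{C}\ell(M,\mathtt{g})$, whose Clifford product satisfies $\boldsymbol{\gamma}^\mu\boldsymbol{\gamma}^\nu+\boldsymbol{\gamma}^\nu\boldsymbol{\gamma}^\mu=2\eta^{\mu\nu}$; for $1$-forms $a,b$, $a\cdot b=\tfrac12(ab+ba)$ is the (Minkowski) scalar product, so $a^2=a\cdot a$. The volume element is $\boldsymbol{\gamma}^5=\boldsymbol{\gamma}^0\boldsymbol{\gamma}^1\boldsymbol{\gamma}^2\boldsymbol{\gamma}^3$, which satisfies $(\boldsymbol{\gamma}^5)^2=-1$, anticommutes with $1$-forms and commutes with $2$-forms; $e^{\boldsymbol{\gamma}^5 S}:=\cos S+\boldsymbol{\gamma}^5\sin S$. The Dirac operator is $\boldsymbol{\partial}=\boldsymbol{\gamma}^\mu\partial_\mu=d-\delta$ ($\delta$ the Hodge codifferential), acting via the Clifford product; on a function $S$, $\boldsymbol{\partial}S=dS=\partial_\mu S\,\boldsymbol{\gamma}^\mu$. *)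

theory Defs
  imports "HOL-Analysis.Analysis"
begin

text \<open>Minkowski spacetime M = R^4 with coordinates x$0..x$3 (index type 4).
  The Clifford bundle of differential forms is trivial: each fibre is the real
  Clifford algebra Cl(1,3), realised on the basis of blades gamma^A, A a subset
  of the index set {0,1,2,3}, A ordered increasingly.  A multivector is the
  function giving its coefficients.\<close>

type_synonym mv = "4 set \<Rightarrow> real"

definition eta :: "4 \<Rightarrow> real" where
  "eta i = (if i = 0 then 1 else -1)"

text \<open>gamma^A gamma^B = blade_sign A B gamma^(A symmetric-difference B)\<close>
definition blade_sign :: "4 set \<Rightarrow> 4 set \<Rightarrow> real" where
  "blade_sign A B = (-1) ^ card {(a, b). a \<in> A \<and> b \<in> B \<and> b < a} * (\<Prod>i\<in>A \<inter> B. eta i)"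

definition cmul :: "mv \<Rightarrow> mv \<Rightarrow> mv" (infixl "\<diamondop>" 70) where
  "cmul x y = (\<lambda>C. \<Sum>A\<in>UNIV. \<Sum>B\<in>UNIV.
      if (A - B) \<union> (B - A) = C then blade_sign A B * x A * y B else 0)"

definition mv_zero :: mv where "mv_zero = (\<lambda>A. 0)"
definition mv_add :: "mv \<Rightarrow> mv \<Rightarrow> mv" where "mv_add x y = (\<lambda>A. x A + y A)"
definition mv_scale :: "real \<Rightarrow> mv \<Rightarrow> mv" where "mv_scale c x = (\<lambda>A. c * x A)"
definition mv_scalar :: "real \<Rightarrow> mv" where "mv_scalar c = (\<lambda>A. if A = {} then c else 0)"

text \<open>gamma^mu = dx^mu, and gamma^5 = gamma^0 gamma^1 gamma^2 gamma^3\<close>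
definition gam :: "4 \<Rightarrow> mv" where "gam \<mu> = (\<lambda>A. if A = {\<mu>} then 1 else 0)"
definition gam5 :: mv where "gam5 = (\<lambda>A. if A = UNIV then 1 else 0)"

definition exp_g5 :: "real \<Rightarrow> mv" where
  "exp_g5 s = mv_add (mv_scalar (cos s)) (mv_scale (sin s) gam5)"

definition is_2form :: "mv \<Rightarrow> bool" where
  "is_2form x \<longleftrightarrow> (\<forall>A. card A \<noteq> 2 \<longrightarrow> x A = 0)"

definition mv_dot :: "mv \<Rightarrow> mv \<Rightarrow> mv" where
  "mv_dot a b = mv_scale (1/2) (mv_add (a \<diamondop> b) (b \<diamondop> a))"

definition pd :: "4 \<Rightarrow> (real^4 \<Rightarrow> real) \<Rightarrow> real^4 \<Rightarrow> real" where
  "pd \<mu> f x = deriv (\<lambda>t. f (x + t *\<^sub>R axis \<mu> 1)) 0"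

fun iter_pd :: "4 list \<Rightarrow> (real^4 \<Rightarrow> real) \<Rightarrow> real^4 \<Rightarrow> real" where
  "iter_pd [] f = f"
| "iter_pd (i # is) f = pd i (iter_pd is f)"

definition smooth_fun :: "(real^4 \<Rightarrow> real) \<Rightarrow> bool" where
  "smooth_fun f \<longleftrightarrow> (\<forall>is x. iter_pd is f differentiable (at x))"

definition grad :: "(real^4 \<Rightarrow> real) \<Rightarrow> real^4 \<Rightarrow> mv" where
  "grad S x = (\<lambda>A. \<Sum>\<mu>\<in>UNIV. pd \<mu> S x * gam \<mu> A)"

definition dirac :: "(real^4 \<Rightarrow> mv) \<Rightarrow> real^4 \<Rightarrow> mv" where
  "dirac F x = (\<lambda>C. \<Sum>\<mu>\<in>UNIV. (gam \<mu> \<diamondop> (\<lambda>A. pd \<mu> (\<lambda>y. F y A) x)) C)"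

end

theory Submission
  imports Defs
begin

text \<open>Being a 2-form, \<open>F\<^sub>0\<close> commutes with \<open>\<gamma>5\<close>
  and hence with \<open>e^(\<gamma>5 S)\<close>, whereas \<open>\<gamma>5\<close> anticommutes with \<open>\<gamma>0\<close>; therefore
  \<open>F \<gamma>0 F = F\<^sub>0 \<gamma>0 e^(-\<gamma>5 S) F\<^sub>0 e^(\<gamma>5 S) = F\<^sub>0 \<gamma>0 F\<^sub>0\<close>, and differentiating gives
  \<open>\<partial>F = (\<partial>S) F\<^sub>0 \<gamma>5 e^(\<gamma>5 S)\<close>.  Under (i), \<open>\<partial>S = -\<mu> F\<^sub>0 \<gamma>0 F\<^sub>0\<close>, so \<open>(\<partial>S) F\<^sub>0\<close>
  contains the factor \<open>F\<^sub>0\<^sup>2 = 0\<close>.  Under (ii), invertibility of \<open>\<gamma>5 e^(\<gamma>5 S)\<close> gives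
  \<open>(\<partial>S) F\<^sub>0 = 0\<close>, hence \<open>(\<partial>S)\<^sup>2 F\<^sub>0 = 0\<close>; but \<open>(\<partial>S)\<^sup>2 = \<partial>S \<cdot> \<partial>S\<close> is a scalar and
  \<open>F\<^sub>0 \<noteq> 0\<close>.\<close>

(* Kept as a constant, unlike the library abbreviation sym_diff, so that simp does not take blade indices apart. *)
definition symdiff :: "'a set \<Rightarrow> 'a set \<Rightarrow> 'a set" where
  "symdiff A B = A - B \<union> (B - A)"

lemma symdiff_eq_iff: "symdiff A B = C \<longleftrightarrow> B = symdiff A C"
  unfolding symdiff_def by blast

lemma symdiff_cancel [simp]: "symdiff A (symdiff A B) = B"
  unfolding symdiff_def by blast

lemma symdiff_self [simp]: "symdiff A A = {}"
  unfolding symdiff_def by blast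

lemma symdiff_commute: "symdiff A B = symdiff B A"
  unfolding symdiff_def by blast

lemma symdiff_assoc: "symdiff (symdiff A B) D = symdiff B (symdiff A D)"
  unfolding symdiff_def by blast

lemma sum_reindex_symdiff:
  fixes A :: "'a::finite set"
  shows "(\<Sum>C\<in>UNIV. f C) = (\<Sum>B\<in>UNIV. f (symdiff A B))"
  by (rule sum.reindex_bij_witness[where i="symdiff A" and j="symdiff A"]) auto

lemma cmul_apply: "(x \<diamondop> y) C = (\<Sum>A\<in>UNIV. blade_sign A (symdiff A C) * x A * y (symdiff A C))"
proof -
  have "(x \<diamondop> y) C =
      (\<Sum>A\<in>UNIV. \<Sum>B\<in>UNIV. if B = symdiff A C then blade_sign A B * x A * y B else 0)"
    unfolding cmul_def by (intro sum.cong refl) (metis symdiff_def symdiff_eq_iff)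
  then show ?thesis
    by (simp add: sum.delta')
qed

subsection \<open>Associativity of the Clifford product\<close>

definition inversions :: "'a::linorder set \<Rightarrow> 'a set \<Rightarrow> nat" where
  "inversions A B = card {(a, b). a \<in> A \<and> b \<in> B \<and> b < a}"

lemma blade_sign_eq: "blade_sign A B = (-1) ^ inversions A B * (\<Prod>i\<in>A \<inter> B. eta i)"
  unfolding blade_sign_def inversions_def ..

lemma inversions_Un_left:
  fixes X :: "'a::{linorder, finite} set"
  assumes "X \<inter> Y = {}"
  shows "inversions (X \<union> Y) Z = inversions X Z + inversions Y Z"
proof -
  have "{(a, b). a \<in> X \<union> Y \<and> b \<in> Z \<and> b < a} =
      {(a, b). a \<in> X \<and> b \<in> Z \<and> b < a} \<union> {(a, b). a \<in> Y \<and> b \<in> Z \<and> b < a}"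
    by blast
  with assms show ?thesis
    unfolding inversions_def by (simp add: card_Un_disjoint disjoint_iff)
qed

lemma inversions_Un_right:
  fixes X :: "'a::{linorder, finite} set"
  assumes "X \<inter> Y = {}"
  shows "inversions Z (X \<union> Y) = inversions Z X + inversions Z Y"
proof -
  have "{(a, b). a \<in> Z \<and> b \<in> X \<union> Y \<and> b < a} =
      {(a, b). a \<in> Z \<and> b \<in> X \<and> b < a} \<union> {(a, b). a \<in> Z \<and> b \<in> Y \<and> b < a}"
    by blast
  with assms show ?thesis
    unfolding inversions_def by (simp add: card_Un_disjoint disjoint_iff)
qed

lemma inversions_symdiff_left:
  fixes A :: "'a::{linorder, finite} set"
  shows "inversions (symdiff A B) Z + 2 * inversions (A \<inter> B) Z = inversions A Z + inversions B Z"
proof -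
  have "A = (A - B) \<union> (A \<inter> B)" "B = (B - A) \<union> (A \<inter> B)" by blast+
  then have "inversions A Z = inversions (A - B) Z + inversions (A \<inter> B) Z"
    "inversions B Z = inversions (B - A) Z + inversions (A \<inter> B) Z"
    by (metis Diff_disjoint inf_commute inf_left_commute inversions_Un_left inf_bot_right)+
  moreover have "inversions (symdiff A B) Z = inversions (A - B) Z + inversions (B - A) Z"
    unfolding symdiff_def by (rule inversions_Un_left) blast
  ultimately show ?thesis by simp
qed

lemma inversions_symdiff_right:
  fixes A :: "'a::{linorder, finite} set"
  shows "inversions Z (symdiff A B) + 2 * inversions Z (A \<inter> B) = inversions Z A + inversions Z B"
proof -
  have "A = (A - B) \<union> (A \<inter> B)" "B = (B - A) \<union> (A \<inter> B)" by blast+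
  then have "inversions Z A = inversions Z (A - B) + inversions Z (A \<inter> B)"
    "inversions Z B = inversions Z (B - A) + inversions Z (A \<inter> B)"
    by (metis Diff_disjoint inf_commute inf_left_commute inversions_Un_right inf_bot_right)+
  moreover have "inversions Z (symdiff A B) = inversions Z (A - B) + inversions Z (B - A)"
    unfolding symdiff_def by (rule inversions_Un_right) blast
  ultimately show ?thesis by simp
qed

lemma minus_one_power_add_even: "(-1::real) ^ (n + 2 * k) = (-1) ^ n"
  by (simp add: power_add power_mult)

lemma blade_sign_cocycle:
  "blade_sign A B * blade_sign (symdiff A B) Z = blade_sign B Z * blade_sign A (symdiff B Z)"
proof -
  have sign: "(-1::real) ^ (inversions A B + inversions (symdiff A B) Z)
      = (-1) ^ (inversions B Z + inversions A (symdiff B Z))"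
  proof -
    have "(-1::real) ^ (inversions A B + inversions (symdiff A B) Z)
        = (-1) ^ (inversions A B + inversions (symdiff A B) Z + 2 * inversions (A \<inter> B) Z)"
      by (simp only: minus_one_power_add_even)
    also have "\<dots> = (-1) ^ (inversions A B + inversions A Z + inversions B Z)"
      using inversions_symdiff_left[of A B Z] by (simp add: add.assoc)
    also have "\<dots> = (-1) ^ (inversions B Z + inversions A (symdiff B Z) + 2 * inversions A (B \<inter> Z))"
      using inversions_symdiff_right[of A B Z] by (simp add: algebra_simps)
    also have "\<dots> = (-1) ^ (inversions B Z + inversions A (symdiff B Z))"
      by (simp only: minus_one_power_add_even)
    finally show ?thesis .
  qed
  have metric: "(\<Prod>i\<in>A \<inter> B. eta i) * (\<Prod>i\<in>symdiff A B \<inter> Z. eta i)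
      = (\<Prod>i\<in>B \<inter> Z. eta i) * (\<Prod>i\<in>A \<inter> symdiff B Z. eta i)"
  proof -
    have "(\<Prod>i\<in>A \<inter> B. eta i) * (\<Prod>i\<in>symdiff A B \<inter> Z. eta i)
        = (\<Prod>i\<in>(A \<inter> B) \<union> (symdiff A B \<inter> Z). eta i)"
      by (rule prod.union_disjoint[symmetric]) (auto simp: symdiff_def)
    also have "(A \<inter> B) \<union> (symdiff A B \<inter> Z) = (B \<inter> Z) \<union> (A \<inter> symdiff B Z)"
      by (auto simp: symdiff_def)
    also have "(\<Prod>i\<in>(B \<inter> Z) \<union> (A \<inter> symdiff B Z). eta i)
        = (\<Prod>i\<in>B \<inter> Z. eta i) * (\<Prod>i\<in>A \<inter> symdiff B Z. eta i)"
      by (rule prod.union_disjoint) (auto simp: symdiff_def)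
    finally show ?thesis .
  qed
  show ?thesis
    using sign metric unfolding blade_sign_eq power_add by (simp add: mult_ac)
qed

lemma cmul_assoc: "(x \<diamondop> y) \<diamondop> z = x \<diamondop> (y \<diamondop> z)"
proof
  fix D
  let ?t = "\<lambda>A B. blade_sign (symdiff A B) (symdiff (symdiff A B) D) * blade_sign A B
              * x A * y B * z (symdiff (symdiff A B) D)"
  have "((x \<diamondop> y) \<diamondop> z) D = (\<Sum>C\<in>UNIV. \<Sum>A\<in>UNIV. blade_sign C (symdiff C D)
      * blade_sign A (symdiff A C) * x A * y (symdiff A C) * z (symdiff C D))"
    unfolding cmul_apply[of "x \<diamondop> y"] cmul_apply[of x y]
    by (simp add: sum_distrib_left sum_distrib_right mult_ac)
  also have "\<dots> = (\<Sum>A\<in>UNIV. \<Sum>C\<in>UNIV. blade_sign C (symdiff C D)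
      * blade_sign A (symdiff A C) * x A * y (symdiff A C) * z (symdiff C D))"
    by (rule sum.swap)
  also have "\<dots> = (\<Sum>A\<in>UNIV. \<Sum>B\<in>UNIV. ?t A B)"
  proof (rule sum.cong[OF refl])
    fix A
    show "(\<Sum>C\<in>UNIV. blade_sign C (symdiff C D) * blade_sign A (symdiff A C) * x A
        * y (symdiff A C) * z (symdiff C D)) = (\<Sum>B\<in>UNIV. ?t A B)"
      by (subst sum_reindex_symdiff[of _ A]) simp
  qed
  also have "\<dots> = (\<Sum>A\<in>UNIV. \<Sum>B\<in>UNIV. blade_sign A (symdiff A D)
      * blade_sign B (symdiff B (symdiff A D)) * x A * y B * z (symdiff B (symdiff A D)))"
  proof (intro sum.cong refl)
    fix A B
    have "symdiff B (symdiff B (symdiff A D)) = symdiff A D" by simp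
    then have "blade_sign A B * blade_sign (symdiff A B) (symdiff B (symdiff A D))
        = blade_sign B (symdiff B (symdiff A D)) * blade_sign A (symdiff A D)"
      using blade_sign_cocycle[of A B "symdiff B (symdiff A D)"] by (simp add: symdiff_assoc)
    then show "?t A B = blade_sign A (symdiff A D) * blade_sign B (symdiff B (symdiff A D))
        * x A * y B * z (symdiff B (symdiff A D))"
      by (simp add: symdiff_assoc mult_ac)
  qed
  also have "\<dots> = (x \<diamondop> (y \<diamondop> z)) D"
    unfolding cmul_apply[of x] cmul_apply[of y z]
    by (simp add: sum_distrib_left sum_distrib_right mult_ac)
  finally show "((x \<diamondop> y) \<diamondop> z) D = (x \<diamondop> (y \<diamondop> z)) D" .
qed

lemma cmul_add_left: "mv_add x y \<diamondop> z = mv_add (x \<diamondop> z) (y \<diamondop> z)"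
  by (rule ext) (simp add: cmul_apply mv_add_def algebra_simps sum.distrib)

lemma cmul_add_right: "z \<diamondop> mv_add x y = mv_add (z \<diamondop> x) (z \<diamondop> y)"
  by (rule ext) (simp add: cmul_apply mv_add_def algebra_simps sum.distrib)

lemma cmul_scale_left: "mv_scale c x \<diamondop> z = mv_scale c (x \<diamondop> z)"
  by (rule ext) (simp add: cmul_apply mv_scale_def sum_distrib_left mult_ac)

lemma cmul_scale_right: "z \<diamondop> mv_scale c x = mv_scale c (z \<diamondop> x)"
  by (rule ext) (simp add: cmul_apply mv_scale_def sum_distrib_left mult_ac)

lemma cmul_zero_left [simp]: "mv_zero \<diamondop> z = mv_zero"
  by (rule ext) (simp add: cmul_apply mv_zero_def)

lemma cmul_zero_right [simp]: "z \<diamondop> mv_zero = mv_zero"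
  by (rule ext) (simp add: cmul_apply mv_zero_def)

lemma blade_sign_empty [simp]: "blade_sign {} A = 1" "blade_sign A {} = 1"
  by (simp_all add: blade_sign_def)

lemma cmul_scalar_left: "mv_scalar c \<diamondop> z = mv_scale c z"
  by (rule ext) (simp add: cmul_apply mv_scalar_def mv_scale_def symdiff_def if_distrib if_distribR
      cong: if_cong)

lemma cmul_scalar_right: "z \<diamondop> mv_scalar c = mv_scale c z"
proof
  fix C
  have "(z \<diamondop> mv_scalar c) C = (\<Sum>A\<in>UNIV. if A = C then blade_sign A (symdiff A C) * z A * c else 0)"
    unfolding cmul_apply mv_scalar_def by (intro sum.cong refl) (auto simp: symdiff_def)
  then show "(z \<diamondop> mv_scalar c) C = mv_scale c z C"
    by (simp add: mv_scale_def symdiff_def)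
qed

lemmas cmul_linear =
  cmul_add_left cmul_add_right cmul_scale_left cmul_scale_right cmul_scalar_left cmul_scalar_right

lemma mv_scale_one [simp]: "mv_scale 1 x = x"
  by (simp add: mv_scale_def)

lemma mv_scale_scale [simp]: "mv_scale a (mv_scale b x) = mv_scale (a * b) x"
  by (simp add: mv_scale_def mult.assoc)

lemma mv_scale_zero [simp]: "mv_scale c mv_zero = mv_zero"
  by (simp add: mv_scale_def mv_zero_def)

lemma mv_scale_eq_zero_iff: "mv_scale c x = mv_zero \<longleftrightarrow> c = 0 \<or> x = mv_zero"
  by (auto simp: mv_scale_def mv_zero_def fun_eq_iff)

subsection \<open>The pseudoscalar \<open>\<gamma>5\<close>\<close>

lemma inversions_UNIV: "inversions UNIV B + inversions B UNIV = 3 * card (B :: 4 set)"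
proof -
  let ?below = "{(x, y). x \<in> B \<and> (x::4) < y}" and ?above = "{(x, y). x \<in> B \<and> (y::4) < x}"
  have "inversions UNIV B = card (prod.swap ` {(a, b). a \<in> (UNIV::4 set) \<and> b \<in> B \<and> b < a})"
    unfolding inversions_def by (simp add: card_image)
  also have "prod.swap ` {(a, b). a \<in> (UNIV::4 set) \<and> b \<in> B \<and> b < a} = ?below"
    by auto
  finally have "inversions UNIV B + inversions B UNIV = card ?below + card ?above"
    unfolding inversions_def by simp
  also have "\<dots> = card (?below \<union> ?above)"
    by (rule card_Un_disjoint[symmetric]) auto
  also have "?below \<union> ?above = Sigma B (\<lambda>x. UNIV - {x})"
    by (auto simp: neq_iff)
  also have "card (Sigma B (\<lambda>x. UNIV - {x})) = 3 * card B"
    by (simp add: card_SigmaI card_Diff_singleton)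
  finally show ?thesis .
qed

lemma blade_sign_UNIV_swap: "blade_sign UNIV B = (-1) ^ card B * blade_sign B UNIV"
proof -
  have "(-1::real) ^ inversions UNIV B = (-1) ^ (inversions UNIV B + 2 * inversions B UNIV)"
    by (simp only: minus_one_power_add_even)
  also have "\<dots> = (-1) ^ (card B + inversions B UNIV + 2 * card B)"
    using inversions_UNIV[of B] by (intro arg_cong[where f="\<lambda>n. (-1::real) ^ n"]) linarith
  also have "\<dots> = (-1) ^ card B * (-1) ^ inversions B UNIV"
    by (simp add: power_add power_mult)
  finally show ?thesis
    unfolding blade_sign_eq by (simp add: Int_commute mult_ac)
qed

lemma gam5_cmul_apply: "(gam5 \<diamondop> x) C = blade_sign UNIV (symdiff UNIV C) * x (symdiff UNIV C)"
  unfolding cmul_apply gam5_def by (simp add: if_distrib if_distribR cong: if_cong)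

lemma cmul_gam5_apply: "(x \<diamondop> gam5) C = blade_sign (symdiff UNIV C) UNIV * x (symdiff UNIV C)"
proof -
  have "(x \<diamondop> gam5) C = (\<Sum>A\<in>UNIV. if A = symdiff UNIV C then blade_sign A (symdiff A C) * x A else 0)"
    unfolding cmul_apply gam5_def by (intro sum.cong refl) (auto simp: symdiff_def)
  moreover have "symdiff (symdiff UNIV C) C = UNIV"
    by (auto simp: symdiff_def)
  ultimately show ?thesis by simp
qed

lemma gam5_commute_2form:
  assumes "is_2form x"
  shows "gam5 \<diamondop> x = x \<diamondop> gam5"
proof
  fix C
  show "(gam5 \<diamondop> x) C = (x \<diamondop> gam5) C"
  proof (cases "card (symdiff UNIV C) = 2")
    case True
    then show ?thesis
      unfolding gam5_cmul_apply cmul_gam5_apply blade_sign_UNIV_swap by simp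
  next
    case False
    then show ?thesis
      using assms unfolding gam5_cmul_apply cmul_gam5_apply is_2form_def by simp
  qed
qed

lemma gam5_anticommute_gam: "gam5 \<diamondop> gam \<mu> = mv_scale (-1) (gam \<mu> \<diamondop> gam5)"
proof
  fix C
  show "(gam5 \<diamondop> gam \<mu>) C = mv_scale (-1) (gam \<mu> \<diamondop> gam5) C"
    unfolding gam5_cmul_apply cmul_gam5_apply mv_scale_def
    by (cases "symdiff UNIV C = {\<mu>}") (simp_all add: gam_def blade_sign_UNIV_swap)
qed

lemma gam5_square: "gam5 \<diamondop> gam5 = mv_scalar (-1)"
proof
  fix C
  have "(\<Prod>i\<in>UNIV. eta i) = eta 0 * (\<Prod>i\<in>UNIV - {0}. eta i)"
    by (rule prod.remove) auto
  also have "(\<Prod>i\<in>UNIV - {0}. eta i) = (\<Prod>i\<in>UNIV - {0::4}. -1)"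
    by (rule prod.cong) (auto simp: eta_def)
  finally have "(\<Prod>i\<in>UNIV. eta i) = -1"
    by (simp add: card_Diff_singleton eta_def)
  moreover have "inversions (UNIV :: 4 set) UNIV = 6"
    using inversions_UNIV[of UNIV] by simp
  ultimately have "blade_sign UNIV UNIV = -1"
    unfolding blade_sign_eq by simp
  moreover have "symdiff UNIV C = UNIV \<longleftrightarrow> C = ({} :: 4 set)"
    by (auto simp: symdiff_def)
  ultimately show "(gam5 \<diamondop> gam5) C = mv_scalar (-1) C"
    unfolding gam5_cmul_apply by (auto simp: gam5_def mv_scalar_def)
qed

subsection \<open>The duality rotation \<open>e^(\<gamma>5 s)\<close>\<close>

lemma exp_g5_add: "exp_g5 s \<diamondop> exp_g5 t = exp_g5 (s + t)"
  unfolding exp_g5_def cmul_linear gam5_square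
  by (rule ext) (simp add: mv_add_def mv_scale_def mv_scalar_def cos_add sin_add algebra_simps)

lemma exp_g5_zero: "exp_g5 0 = mv_scalar 1"
  by (rule ext) (simp add: exp_g5_def mv_add_def mv_scale_def mv_scalar_def)

lemma exp_g5_gam: "exp_g5 s \<diamondop> gam \<mu> = gam \<mu> \<diamondop> exp_g5 (- s)"
  unfolding exp_g5_def cmul_linear gam5_anticommute_gam
  by (rule ext) (simp add: mv_add_def mv_scale_def mv_scalar_def)

lemma exp_g5_commute_2form: "is_2form x \<Longrightarrow> exp_g5 s \<diamondop> x = x \<diamondop> exp_g5 s"
  unfolding exp_g5_def cmul_linear by (simp add: gam5_commute_2form)

lemma exp_g5_sandwich_gam:
  assumes "is_2form x"
  shows "(x \<diamondop> exp_g5 s) \<diamondop> gam \<mu> \<diamondop> (x \<diamondop> exp_g5 s) = x \<diamondop> gam \<mu> \<diamondop> x"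
proof -
  have "(x \<diamondop> exp_g5 s) \<diamondop> gam \<mu> \<diamondop> (x \<diamondop> exp_g5 s) = x \<diamondop> gam \<mu> \<diamondop> (exp_g5 (- s) \<diamondop> x) \<diamondop> exp_g5 s"
    by (simp only: cmul_assoc exp_g5_gam)
  also have "\<dots> = x \<diamondop> gam \<mu> \<diamondop> x \<diamondop> exp_g5 (- s + s)"
    by (simp only: exp_g5_commute_2form[OF assms] cmul_assoc exp_g5_add)
  finally show ?thesis
    by (simp add: exp_g5_zero cmul_scalar_right)
qed

lemma cmul_gam5_exp_g5_eq_zero_iff: "x \<diamondop> (gam5 \<diamondop> exp_g5 s) = mv_zero \<longleftrightarrow> x = mv_zero"
proof -
  have "gam5 \<diamondop> exp_g5 s \<diamondop> (exp_g5 (- s) \<diamondop> mv_scale (-1) gam5)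
      = mv_scale (-1) (gam5 \<diamondop> (exp_g5 s \<diamondop> exp_g5 (- s)) \<diamondop> gam5)"
    by (simp only: cmul_assoc cmul_scale_right)
  also have "\<dots> = mv_scalar 1"
    by (simp add: exp_g5_add exp_g5_zero cmul_scalar_right gam5_square)
      (simp add: mv_scale_def mv_scalar_def fun_eq_iff)
  finally have "x \<diamondop> (gam5 \<diamondop> exp_g5 s) \<diamondop> (exp_g5 (- s) \<diamondop> mv_scale (-1) gam5) = x"
    by (simp add: cmul_assoc cmul_scalar_right)
  then show ?thesis
    by (metis cmul_zero_left cmul_zero_right)
qed

lemma blade_sign_singletons:
  "blade_sign {\<mu>} {\<nu>} = (if \<mu> = \<nu> then eta \<mu> else if \<nu> < \<mu> then -1 else 1)"
proof -
  have "{(a, b). a \<in> {\<mu>} \<and> b \<in> {\<nu>} \<and> b < a} = (if \<nu> < \<mu> then {(\<mu>, \<nu>)} else {})"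
    by auto
  then show ?thesis
    unfolding blade_sign_def by auto
qed

lemma gam_cmul_gam_apply:
  "(gam \<mu> \<diamondop> gam \<nu>) C = (if C = symdiff {\<mu>} {\<nu>} then blade_sign {\<mu>} {\<nu>} else 0)"
proof -
  have "(gam \<mu> \<diamondop> gam \<nu>) C = (\<Sum>A\<in>UNIV. if A = {\<mu>} then blade_sign A (symdiff A C) * gam \<nu> (symdiff A C) else 0)"
    unfolding cmul_apply by (intro sum.cong refl) (simp add: gam_def)
  also have "\<dots> = blade_sign {\<mu>} (symdiff {\<mu>} C) * gam \<nu> (symdiff {\<mu>} C)"
    by simp
  also have "\<dots> = (if C = symdiff {\<mu>} {\<nu>} then blade_sign {\<mu>} {\<nu>} else 0)"
    unfolding gam_def using symdiff_eq_iff[of "{\<mu>}" C "{\<nu>}"] by auto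
  finally show ?thesis .
qed

lemma grad_cmul_apply: "(grad S x \<diamondop> y) C = (\<Sum>\<mu>\<in>UNIV. pd \<mu> S x * (gam \<mu> \<diamondop> y) C)"
proof -
  have "(grad S x \<diamondop> y) C = (\<Sum>A\<in>UNIV. \<Sum>\<mu>\<in>UNIV. pd \<mu> S x * (blade_sign A (symdiff A C) * gam \<mu> A * y (symdiff A C)))"
    unfolding cmul_apply grad_def by (simp add: sum_distrib_left sum_distrib_right mult_ac)
  also have "\<dots> = (\<Sum>\<mu>\<in>UNIV. \<Sum>A\<in>UNIV. pd \<mu> S x * (blade_sign A (symdiff A C) * gam \<mu> A * y (symdiff A C)))"
    by (rule sum.swap)
  finally show ?thesis
    unfolding cmul_apply by (simp add: sum_distrib_left)
qed

lemma cmul_grad_apply: "(y \<diamondop> grad S x) C = (\<Sum>\<nu>\<in>UNIV. pd \<nu> S x * (y \<diamondop> gam \<nu>) C)"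
proof -
  have "(y \<diamondop> grad S x) C = (\<Sum>A\<in>UNIV. \<Sum>\<nu>\<in>UNIV. pd \<nu> S x * (blade_sign A (symdiff A C) * y A * gam \<nu> (symdiff A C)))"
    unfolding cmul_apply grad_def by (simp add: sum_distrib_left mult_ac)
  also have "\<dots> = (\<Sum>\<nu>\<in>UNIV. \<Sum>A\<in>UNIV. pd \<nu> S x * (blade_sign A (symdiff A C) * y A * gam \<nu> (symdiff A C)))"
    by (rule sum.swap)
  finally show ?thesis
    unfolding cmul_apply by (simp add: sum_distrib_left)
qed

text \<open>The off-diagonal terms cancel in pairs since \<open>\<gamma>\<mu> \<gamma>\<nu> = -\<gamma>\<nu> \<gamma>\<mu>\<close> for \<open>\<mu> \<noteq> \<nu>\<close>.\<close>

lemma grad_square: "grad S x \<diamondop> grad S x = mv_scalar (\<Sum>\<mu>\<in>UNIV. eta \<mu> * (pd \<mu> S x)\<^sup>2)"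
proof
  fix C
  let ?p = "\<lambda>\<mu>. pd \<mu> S x"
  let ?f = "\<lambda>\<mu> \<nu>. ?p \<mu> * ?p \<nu> * (if C = symdiff {\<mu>} {\<nu>} then blade_sign {\<mu>} {\<nu>} else 0)"
  have "(grad S x \<diamondop> grad S x) C = (\<Sum>\<mu>\<in>UNIV. \<Sum>\<nu>\<in>UNIV. ?p \<mu> * ?p \<nu> * (gam \<mu> \<diamondop> gam \<nu>) C)"
    unfolding grad_cmul_apply by (simp add: cmul_grad_apply sum_distrib_left mult_ac)
  then have expand: "(grad S x \<diamondop> grad S x) C = (\<Sum>\<mu>\<in>UNIV. \<Sum>\<nu>\<in>UNIV. ?f \<mu> \<nu>)"
    unfolding gam_cmul_gam_apply .
  show "(grad S x \<diamondop> grad S x) C = mv_scalar (\<Sum>\<mu>\<in>UNIV. eta \<mu> * (pd \<mu> S x)\<^sup>2) C"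
  proof (cases "C = {}")
    case True
    have "(\<Sum>\<mu>\<in>UNIV. \<Sum>\<nu>\<in>UNIV. ?f \<mu> \<nu>) = (\<Sum>\<mu>\<in>UNIV. \<Sum>\<nu>\<in>UNIV. if \<nu> = \<mu> then ?p \<mu> * ?p \<nu> * eta \<mu> else 0)"
      using True by (intro sum.cong refl) (auto simp: symdiff_def blade_sign_singletons)
    then show ?thesis
      using expand True by (simp add: mv_scalar_def power2_eq_square mult_ac)
  next
    case False
    have antisymmetric: "?f \<nu> \<mu> = - ?f \<mu> \<nu>" for \<mu> \<nu>
    proof (cases "\<mu> = \<nu>")
      case True
      with \<open>C \<noteq> {}\<close> show ?thesis by simp
    next
      case False
      then have "blade_sign {\<nu>} {\<mu>} = - blade_sign {\<mu>} {\<nu>}"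
        by (auto simp: blade_sign_singletons neq_iff)
      then show ?thesis
        by (simp add: symdiff_commute[of "{\<nu>}"])
    qed
    have "(\<Sum>\<mu>\<in>UNIV. \<Sum>\<nu>\<in>UNIV. ?f \<mu> \<nu>) = (\<Sum>\<nu>\<in>UNIV. \<Sum>\<mu>\<in>UNIV. - ?f \<nu> \<mu>)"
      by (subst sum.swap) (intro sum.cong refl antisymmetric)
    then have "(\<Sum>\<mu>\<in>UNIV. \<Sum>\<nu>\<in>UNIV. ?f \<mu> \<nu>) = 0"
      by (simp only: sum_negf)
    then show ?thesis
      using expand False by (simp add: mv_scalar_def)
  qed
qed

lemma mv_dot_grad_grad: "mv_dot (grad S x) (grad S x) = mv_scalar (\<Sum>\<mu>\<in>UNIV. eta \<mu> * (pd \<mu> S x)\<^sup>2)"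
  unfolding mv_dot_def grad_square by (auto simp: mv_scale_def mv_add_def mv_scalar_def)

lemma grad_null_of_annihilates:
  assumes "grad S x \<diamondop> y = mv_zero" and "y \<noteq> mv_zero"
  shows "mv_dot (grad S x) (grad S x) = mv_zero"
proof -
  have "mv_scale (\<Sum>\<mu>\<in>UNIV. eta \<mu> * (pd \<mu> S x)\<^sup>2) y = grad S x \<diamondop> (grad S x \<diamondop> y)"
    by (simp only: cmul_assoc[symmetric] grad_square cmul_scalar_left)
  with assms have "(\<Sum>\<mu>\<in>UNIV. eta \<mu> * (pd \<mu> S x)\<^sup>2) = 0"
    by (simp add: mv_scale_eq_zero_iff)
  then show ?thesis
    by (simp add: mv_dot_grad_grad mv_scalar_def mv_zero_def)
qed

subsection \<open>The Dirac operator on \<open>F\<^sub>0 e^(\<gamma>5 S)\<close>\<close>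

lemma pd_cos_sin_comp:
  assumes "S differentiable (at x)"
  shows "pd \<mu> (\<lambda>y. cos (S y) * a + sin (S y) * b) x = (- sin (S x) * a + cos (S x) * b) * pd \<mu> S x"
proof -
  define h where "h t = S (x + t *\<^sub>R axis \<mu> 1)" for t :: real
  have "(\<lambda>t::real. x + t *\<^sub>R axis \<mu> (1::real)) differentiable (at 0)"
    by (intro derivative_intros)
  then have "(S \<circ> (\<lambda>t::real. x + t *\<^sub>R axis \<mu> 1)) differentiable (at 0)"
    by (rule differentiable_chain_at) (simp add: assms)
  then have "h differentiable (at 0)"
    by (simp add: h_def[abs_def] o_def)
  then have "(h has_real_derivative deriv h 0) (at 0)"
    using DERIV_deriv_iff_real_differentiable by blast
  then have "((\<lambda>t. cos (h t) * a + sin (h t) * b) has_real_derivative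
      (- sin (h 0) * a + cos (h 0) * b) * deriv h 0) (at 0)"
    by (auto intro!: derivative_eq_intros simp: algebra_simps)
  then show ?thesis
    unfolding pd_def h_def by (simp add: DERIV_imp_deriv)
qed

lemma dirac_cmul_exp_g5:
  assumes "S differentiable (at x)"
  shows "dirac (\<lambda>y. F0 \<diamondop> exp_g5 (S y)) x = grad S x \<diamondop> F0 \<diamondop> (gam5 \<diamondop> exp_g5 (S x))"
proof -
  have exp_expand: "F0 \<diamondop> exp_g5 s = (\<lambda>A. cos s * F0 A + sin s * (F0 \<diamondop> gam5) A)" for s
    unfolding exp_g5_def cmul_linear by (simp add: mv_add_def mv_scale_def)
  have "F0 \<diamondop> (gam5 \<diamondop> exp_g5 s) = (\<lambda>A. - sin s * F0 A + cos s * (F0 \<diamondop> gam5) A)" for s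
    unfolding exp_g5_def cmul_linear gam5_square by (simp add: mv_add_def mv_scale_def)
  then have "(\<lambda>A. pd \<mu> (\<lambda>y. (F0 \<diamondop> exp_g5 (S y)) A) x)
      = mv_scale (pd \<mu> S x) (F0 \<diamondop> (gam5 \<diamondop> exp_g5 (S x)))" for \<mu>
    unfolding exp_expand pd_cos_sin_comp[OF assms] by (simp add: mv_scale_def mult_ac)
  then have "dirac (\<lambda>y. F0 \<diamondop> exp_g5 (S y)) x
      = (\<lambda>C. \<Sum>\<mu>\<in>UNIV. (gam \<mu> \<diamondop> mv_scale (pd \<mu> S x) (F0 \<diamondop> (gam5 \<diamondop> exp_g5 (S x)))) C)"
    unfolding dirac_def by simp
  also have "\<dots> = grad S x \<diamondop> (F0 \<diamondop> (gam5 \<diamondop> exp_g5 (S x)))"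
    unfolding cmul_scale_right fun_eq_iff grad_cmul_apply by (simp add: mv_scale_def)
  finally show ?thesis
    by (simp only: cmul_assoc)
qed

theorem mainTheorem1:
  fixes S :: "real^4 \<Rightarrow> real" and F0 :: mv and m :: real
  assumes "smooth_fun S"
    and "is_2form F0" and "F0 \<noteq> mv_zero" and "F0 \<diamondop> F0 = mv_zero"
  defines "F \<equiv> (\<lambda>x. F0 \<diamondop> exp_g5 (S x))"
  shows "((\<forall>x. mv_scale (-1) (grad S x) = mv_scale m (F x \<diamondop> gam 0 \<diamondop> F x))
            \<longrightarrow> (\<forall>x. dirac F x = mv_zero))
       \<and> ((\<forall>x. dirac F x = mv_zero) \<longrightarrow> (\<forall>x. mv_dot (grad S x) (grad S x) = mv_zero))"
proof -
  have "S differentiable (at x)" for x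
    using assms(1) iter_pd.simps(1) unfolding smooth_fun_def by metis
  then have dirac_F: "dirac F x = mv_zero \<longleftrightarrow> grad S x \<diamondop> F0 = mv_zero" for x
    unfolding F_def by (simp add: dirac_cmul_exp_g5 cmul_gam5_exp_g5_eq_zero_iff)
  have "grad S x \<diamondop> F0 = mv_zero"
    if "mv_scale (-1) (grad S x) = mv_scale m (F x \<diamondop> gam 0 \<diamondop> F x)" for x
  proof -
    have "grad S x = mv_scale (- m) (F0 \<diamondop> gam 0 \<diamondop> F0)"
      using arg_cong[OF that, of "mv_scale (-1)"]
      unfolding F_def exp_g5_sandwich_gam[OF assms(2)] by simp
    then show ?thesis
      by (simp add: cmul_scale_left cmul_assoc assms(4))
  qed
  moreover have "mv_dot (grad S x) (grad S x) = mv_zero" if "grad S x \<diamondop> F0 = mv_zero" for x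
    using grad_null_of_annihilates[OF that assms(3)] .
  ultimately show ?thesis
    using dirac_F by blast
qed

end
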